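(* Let $r\ge 2$ be an integer. Let $G$ be the three-layer acyclic directed graph with source nodes $S=\{s_1,\dots,s_r\}$, intermediate nodes $U=\{u_1,\dots,u_r\}$ and $\bar U=\{\bar u_1,\dots,\bar u_r\}$, and terminal nodes $D=\{d_1,\dots,d_r\}$, whose edges are: $(s_i,u_i)$ for each $i\in[r]$; $(s_j,\bar u_i)$ for each ordered pair $i\neq j$ in $[r]$; and $(u_i,d_i)$, $(\bar u_i,d_i)$ for each $i\in[r]$; every edge has capacity $1$. Let $\mathcal{B}=\{\beta_v: v\in U\cup\bar U\}$ where $\beta_v$ is the set of all edges entering $v$, and let $\mathcal{I}=(G,S,D,\mathcal{B})$. Then $\mathbf{R}_{\tt key}(\mathcal{I})=1$ (achieved, for $n=1$, by each source $s_i$ sending one bit $b_i$ on all its outgoing edges, each intermediate node forwarding the binary sum of its inputs, and $K=\sum_{i=1}^r b_i \bmod 2$), while $\mathbf{R}_{\tt key(2)}(\mathcal{I})\le \frac{1}{r-1}$.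
   Context: Network coding instance: $\mathcal{I}=(G,S,D,\mathcal{B})$ where $G=(V,E)$ is a finite acyclic directed graph, each edge $e$ has a capacity $c_e>0$, $S$ source nodes, $D$ terminal nodes, $\mathcal{B}$ a collection of subsets of $E$ (edge sets that may be eavesdropped). Each source $s_i$ holds an unlimited collection of mutually independent uniform bits $\{b_{ij}\}_j$, independent across sources. $[r]=\{1,\dots,r\}$. Network code of blocklength $n$: for each edge $e=(u,v)$ an encoding function producing $X^n_e\in\mathcal{X}^n_e$, $|\mathcal{X}^n_e|=\lfloor 2^{c_e n}\rfloor$, from $X^n_{\mathrm{In}(u)}$ (messages on edges entering $u$, plus $u$'s own bits if $u$ is a source); decoding functions at terminals of $X^n_{\mathrm{In}(d_j)}$. $(R,n)_{\tt key}$-feasibility: there is a blocklength-$n$ code and a random variable $K$ (function of source bits), uniform with $H(K)=Rn$, with $H(K\mid X^n_{\mathrm{In}(d_j)})=0$ for all $d_j\in D$ and $I(K;(X^n_e:e\in\beta))=0$ for all $\beta\in\mathcal{B}$. $(R,n)_{\tt key(2)}$-feasibility: there is a blocklength-$n$ code, $K$ uniform with $H(K)=Rn$, and a collection $M$ of source bits $b_{ij}$ such that $H(M\mid X^n_{\mathrm{In}(d_j)})=0$ for all $d_j\in D$, $H(K\mid M)=0$, and $I(K;(X^n_e:e\in\beta))=0$ for all $\beta\in\mathcal{B}$. $\mathbf{R}_{\tt key}(\mathcal{I})$ (resp. $\mathbf{R}_{\tt key(2)}(\mathcal{I})$) is the maximum $R$ such that for every $\Delta>0$ there are infinitely many $n$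 for which $\mathcal{I}$ is $(R-\Delta,n)_{\tt key}$-feasible (resp. $(R-\Delta,n)_{\tt key(2)}$-feasible). *)

theory Defs
  imports Complex_Main
begin

text \<open>An outcome assigns to node v and index j the bit b_vj. A code uses finitely many
  bits, m per source; the sample space consists of all assignments of the bits b_vj
  with v a source and j < m (all other entries are fixed to False), with the uniform
  distribution, i.e. the b_vj are i.i.d. uniform bits.\<close>

type_synonym 'v outcome = "'v \<Rightarrow> nat \<Rightarrow> bool"

definition sample_space :: "'v set \<Rightarrow> nat \<Rightarrow> 'v outcome set" where
  "sample_space S m = {\<omega>. \<forall>v j. (v \<notin> S \<or> m \<le> j) \<longrightarrow> \<omega> v j = False}"

definition prb :: "'a set \<Rightarrow> ('a \<Rightarrow> 'b) \<Rightarrow> 'b \<Rightarrow> real" where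
  "prb \<Omega> X y = real (card {\<omega>\<in>\<Omega>. X \<omega> = y}) / real (card \<Omega>)"

definition ent :: "'a set \<Rightarrow> ('a \<Rightarrow> 'b) \<Rightarrow> real" where
  "ent \<Omega> X = - (\<Sum>y\<in>X ` \<Omega>. prb \<Omega> X y * log 2 (prb \<Omega> X y))"

definition cond_ent :: "'a set \<Rightarrow> ('a \<Rightarrow> 'b) \<Rightarrow> ('a \<Rightarrow> 'c) \<Rightarrow> real" where
  "cond_ent \<Omega> X Y = ent \<Omega> (\<lambda>\<omega>. (X \<omega>, Y \<omega>)) - ent \<Omega> Y"

definition mutual_info :: "'a set \<Rightarrow> ('a \<Rightarrow> 'b) \<Rightarrow> ('a \<Rightarrow> 'c) \<Rightarrow> real" where
  "mutual_info \<Omega> X Y = ent \<Omega> X + ent \<Omega> Y - ent \<Omega> (\<lambda>\<omega>. (X \<omega>, Y \<omega>))"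

definition uniform_rv :: "'a set \<Rightarrow> ('a \<Rightarrow> 'b) \<Rightarrow> bool" where
  "uniform_rv \<Omega> X = (\<forall>y\<in>X ` \<Omega>. \<forall>y'\<in>X ` \<Omega>. prb \<Omega> X y = prb \<Omega> X y')"

definition In_edges :: "('v \<times> 'v) set \<Rightarrow> 'v \<Rightarrow> ('v \<times> 'v) set" where
  "In_edges E v = {e \<in> E. snd e = v}"

definition msgs :: "('v outcome \<Rightarrow> ('v \<times> 'v) \<Rightarrow> nat) \<Rightarrow> ('v \<times> 'v) set
    \<Rightarrow> 'v outcome \<Rightarrow> (('v \<times> 'v) \<Rightarrow> nat)" where
  "msgs X A = (\<lambda>\<omega> e. if e \<in> A then X \<omega> e else 0)"

text \<open>A blocklength-n network code using m bits per source, given by its edge messages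
  X \<omega> e: the message on e = (u,v) takes values in an alphabet of size
  floor(2^(c_e n)) (identified with {0..<floor(2^(c_e n))}) and is a function of the
  messages on the edges entering u together with u's own source bits.\<close>
definition is_code :: "('v \<times> 'v) set \<Rightarrow> (('v \<times> 'v) \<Rightarrow> real) \<Rightarrow> 'v set \<Rightarrow> nat \<Rightarrow> nat
    \<Rightarrow> ('v outcome \<Rightarrow> ('v \<times> 'v) \<Rightarrow> nat) \<Rightarrow> bool" where
  "is_code E c S n m X \<longleftrightarrow>
     (\<forall>\<omega>\<in>sample_space S m. \<forall>e\<in>E. X \<omega> e < nat \<lfloor>2 powr (c e * real n)\<rfloor>) \<and>
     (\<forall>e\<in>E. \<forall>\<omega>\<in>sample_space S m. \<forall>\<omega>'\<in>sample_space S m.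
        (\<forall>e'\<in>In_edges E (fst e). X \<omega> e' = X \<omega>' e') \<and> \<omega> (fst e) = \<omega>' (fst e)
          \<longrightarrow> X \<omega> e = X \<omega>' e)"

definition bits_rv :: "('v \<times> nat) set \<Rightarrow> 'v outcome \<Rightarrow> ('v \<times> nat \<Rightarrow> bool)" where
  "bits_rv M = (\<lambda>\<omega> p. if p \<in> M then \<omega> (fst p) (snd p) else False)"

definition key_feasible ::
  "('v \<times> 'v) set \<Rightarrow> (('v \<times> 'v) \<Rightarrow> real) \<Rightarrow> 'v set \<Rightarrow> 'v set \<Rightarrow> ('v \<times> 'v) set set
     \<Rightarrow> real \<Rightarrow> nat \<Rightarrow> bool" where
  "key_feasible E c S D B R n \<longleftrightarrow>
     (\<exists>m X (K :: 'v outcome \<Rightarrow> nat).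
        is_code E c S n m X \<and>
        uniform_rv (sample_space S m) K \<and>
        ent (sample_space S m) K \<ge> R * real n \<and>
        (\<forall>d\<in>D. cond_ent (sample_space S m) K (msgs X (In_edges E d)) = 0) \<and>
        (\<forall>\<beta>\<in>B. mutual_info (sample_space S m) K (msgs X \<beta>) = 0))"

definition key2_feasible ::
  "('v \<times> 'v) set \<Rightarrow> (('v \<times> 'v) \<Rightarrow> real) \<Rightarrow> 'v set \<Rightarrow> 'v set \<Rightarrow> ('v \<times> 'v) set set
     \<Rightarrow> real \<Rightarrow> nat \<Rightarrow> bool" where
  "key2_feasible E c S D B R n \<longleftrightarrow>
     (\<exists>m X (K :: 'v outcome \<Rightarrow> nat) M.
        is_code E c S n m X \<and>
        uniform_rv (sample_space S m) K \<and>
        ent (sample_space S m) K \<ge> R * real n \<and>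
        M \<subseteq> {(i, j). i \<in> S \<and> j < m} \<and>
        (\<forall>d\<in>D. cond_ent (sample_space S m) (bits_rv M) (msgs X (In_edges E d)) = 0) \<and>
        cond_ent (sample_space S m) K (bits_rv M) = 0 \<and>
        (\<forall>\<beta>\<in>B. mutual_info (sample_space S m) K (msgs X \<beta>) = 0))"

text \<open>R is an achievable key rate: for every \<Delta> > 0 there are infinitely many n with
  (R - \<Delta>, n)-feasibility. The key capacity R_key is the maximum of these R.\<close>
definition key_rate_achievable where
  "key_rate_achievable E c S D B R \<longleftrightarrow>
     (\<forall>\<Delta>>0. infinite {n. key_feasible E c S D B (R - \<Delta>) n})"

definition key2_rate_achievable where
  "key2_rate_achievable E c S D B R \<longleftrightarrow>
     (\<forall>\<Delta>>0. infinite {n. key2_feasible E c S D B (R - \<Delta>) n})"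

datatype node = Src nat | Unode nat | Ubar nat | Dst nat

definition ex_edges :: "nat \<Rightarrow> (node \<times> node) set" where
  "ex_edges r =
     {(Src i, Unode i) | i. i \<in> {1..r}} \<union>
     {(Src j, Ubar i) | i j. i \<in> {1..r} \<and> j \<in> {1..r} \<and> i \<noteq> j} \<union>
     {(Unode i, Dst i) | i. i \<in> {1..r}} \<union>
     {(Ubar i, Dst i) | i. i \<in> {1..r}}"

definition ex_cap :: "node \<times> node \<Rightarrow> real" where
  "ex_cap e = 1"

definition ex_sources :: "nat \<Rightarrow> node set" where
  "ex_sources r = Src ` {1..r}"

definition ex_terminals :: "nat \<Rightarrow> node set" where
  "ex_terminals r = Dst ` {1..r}"

definition ex_wiretap :: "nat \<Rightarrow> (node \<times> node) set set" where
  "ex_wiretap r = (\<lambda>v. In_edges (ex_edges r) v) ` (Unode ` {1..r} \<union> Ubar ` {1..r})"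

end

theory Submission
  imports Defs "HOL-Library.FuncSet"
begin

text \<open>Achievability: with n bits per source, every node forwards what it receives except that
  ubar_i sends the XOR of its inputs, and the key is the XOR of all source bits. Each d_i
  decodes it, and it is independent of the inputs of any intermediate node, because flipping
  the bits of a source that the node does not see moves any key value to any other one.

  Converse: secrecy at a node v allows, for every key value, an outcome realising it with the
  inputs of v frozen. For a key decoded directly this shows that the single message on
  (ubar_i, d_i) determines the key, so there are at most 2^n keys. If instead every terminal
  decodes source bits M determining the key, gluing such outcomes for the r - 1 nodes ubar_j,
  j \<noteq> i, makes the message on (ubar_i, d_i) determine an (r - 1)-tuple of key values, so the
  number of keys is at most 2^(n/(r - 1)).\<close>

section \<open>Entropy on a finite uniform sample space\<close>

definition fiber_card :: "'a set \<Rightarrow> ('a \<Rightarrow> 'b) \<Rightarrow> 'b \<Rightarrow> nat" where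
  "fiber_card \<Omega> X y = card {\<omega>\<in>\<Omega>. X \<omega> = y}"

lemma prb_eq_fiber_card: "prb \<Omega> X y = real (fiber_card \<Omega> X y) / real (card \<Omega>)"
  by (simp add: prb_def fiber_card_def)

lemma sum_image_fiber_card:
  assumes "finite \<Omega>"
  shows "(\<Sum>y\<in>X ` \<Omega>. real (fiber_card \<Omega> X y) * h y) = (\<Sum>\<omega>\<in>\<Omega>. h (X \<omega>))"
proof -
  have "(\<Sum>\<omega>\<in>\<Omega>. h (X \<omega>)) = (\<Sum>y\<in>X ` \<Omega>. \<Sum>\<omega>\<in>{\<omega>\<in>\<Omega>. X \<omega> = y}. h (X \<omega>))"
    using assms by (rule sum.image_gen)
  also have "\<dots> = (\<Sum>y\<in>X ` \<Omega>. real (fiber_card \<Omega> X y) * h y)"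
    by (rule sum.cong) (auto simp: fiber_card_def)
  finally show ?thesis by simp
qed

lemma fiber_card_pos: "finite \<Omega> \<Longrightarrow> \<omega> \<in> \<Omega> \<Longrightarrow> fiber_card \<Omega> X (X \<omega>) > 0"
  unfolding fiber_card_def by (subst card_gt_0_iff) auto

lemma prb_pos: "finite \<Omega> \<Longrightarrow> \<omega> \<in> \<Omega> \<Longrightarrow> prb \<Omega> X (X \<omega>) > 0"
  unfolding prb_eq_fiber_card using fiber_card_pos[of \<Omega> \<omega> X] card_gt_0_iff[of \<Omega>]
  by (auto intro!: divide_pos_pos)

lemma sum_prb_image: "finite \<Omega> \<Longrightarrow> \<Omega> \<noteq> {} \<Longrightarrow> (\<Sum>y\<in>X ` \<Omega>. prb \<Omega> X y) = 1"
  using sum_image_fiber_card[of \<Omega> X "\<lambda>_. 1 / real (card \<Omega>)"]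
  by (simp add: prb_eq_fiber_card)

lemma ent_eq_average:
  assumes "finite \<Omega>"
  shows "ent \<Omega> X = - (\<Sum>\<omega>\<in>\<Omega>. log 2 (prb \<Omega> X (X \<omega>))) / real (card \<Omega>)"
proof -
  have "(\<Sum>y\<in>X ` \<Omega>. prb \<Omega> X y * log 2 (prb \<Omega> X y))
      = (\<Sum>y\<in>X ` \<Omega>. real (fiber_card \<Omega> X y) * (log 2 (prb \<Omega> X y) / real (card \<Omega>)))"
    by (simp add: prb_eq_fiber_card)
  also have "\<dots> = (\<Sum>\<omega>\<in>\<Omega>. log 2 (prb \<Omega> X (X \<omega>)) / real (card \<Omega>))"
    by (rule sum_image_fiber_card[OF assms])
  also have "\<dots> = (\<Sum>\<omega>\<in>\<Omega>. log 2 (prb \<Omega> X (X \<omega>))) / real (card \<Omega>)"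
    by (simp add: sum_divide_distrib)
  finally show ?thesis by (simp add: ent_def)
qed

lemma ent_uniform_rv:
  assumes "finite \<Omega>" "\<Omega> \<noteq> {}" "uniform_rv \<Omega> X"
  shows "ent \<Omega> X = log 2 (real (card (X ` \<Omega>)))"
proof -
  obtain \<omega>\<^sub>0 where "\<omega>\<^sub>0 \<in> \<Omega>" using assms(2) by blast
  define p where "p = prb \<Omega> X (X \<omega>\<^sub>0)"
  define N where "N = real (card (X ` \<Omega>))"
  have prb_const: "prb \<Omega> X y = p" if "y \<in> X ` \<Omega>" for y
    using assms(3) \<open>\<omega>\<^sub>0 \<in> \<Omega>\<close> that unfolding uniform_rv_def p_def by blast
  have "N * p = 1"
    using sum_prb_image[OF assms(1,2), of X] by (simp add: prb_const N_def)
  moreover have "ent \<Omega> X = - (N * (p * log 2 p))"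
    by (simp add: ent_def prb_const N_def)
  moreover have "N > 0"
    using assms(1) \<open>\<omega>\<^sub>0 \<in> \<Omega>\<close> by (auto simp: N_def card_gt_0_iff)
  ultimately have "p = 1 / N" "ent \<Omega> X = - log 2 p"
    by (simp_all add: field_simps)
  with \<open>N > 0\<close> show ?thesis
    unfolding N_def by (simp add: log_divide)
qed

lemma cond_ent_eq_average:
  assumes "finite \<Omega>"
  shows "cond_ent \<Omega> X Y = (\<Sum>\<omega>\<in>\<Omega>. log 2 (prb \<Omega> Y (Y \<omega>))
      - log 2 (prb \<Omega> (\<lambda>\<omega>. (X \<omega>, Y \<omega>)) (X \<omega>, Y \<omega>))) / real (card \<Omega>)"
  unfolding cond_ent_def ent_eq_average[OF assms] by (simp add: sum_subtractf diff_divide_distrib)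

lemma mutual_info_eq_average:
  assumes "finite \<Omega>"
  shows "mutual_info \<Omega> X Y = (\<Sum>\<omega>\<in>\<Omega>. log 2 (prb \<Omega> (\<lambda>\<omega>. (X \<omega>, Y \<omega>)) (X \<omega>, Y \<omega>))
      - log 2 (prb \<Omega> X (X \<omega>)) - log 2 (prb \<Omega> Y (Y \<omega>))) / real (card \<Omega>)"
  unfolding mutual_info_def ent_eq_average[OF assms] by (simp add: sum_subtractf diff_divide_distrib)

lemma prb_pair_eq_iff:
  assumes "finite \<Omega>" "\<omega> \<in> \<Omega>"
  shows "prb \<Omega> (\<lambda>\<omega>. (X \<omega>, Y \<omega>)) (X \<omega>, Y \<omega>) = prb \<Omega> Y (Y \<omega>)
    \<longleftrightarrow> (\<forall>\<omega>'\<in>\<Omega>. Y \<omega>' = Y \<omega> \<longrightarrow> X \<omega>' = X \<omega>)"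
proof -
  have sub: "{\<omega>'\<in>\<Omega>. (X \<omega>', Y \<omega>') = (X \<omega>, Y \<omega>)} \<subseteq> {\<omega>'\<in>\<Omega>. Y \<omega>' = Y \<omega>}" by auto
  have "card \<Omega> > 0" using assms card_gt_0_iff by blast
  then have "prb \<Omega> (\<lambda>\<omega>. (X \<omega>, Y \<omega>)) (X \<omega>, Y \<omega>) = prb \<Omega> Y (Y \<omega>)
      \<longleftrightarrow> {\<omega>'\<in>\<Omega>. (X \<omega>', Y \<omega>') = (X \<omega>, Y \<omega>)} = {\<omega>'\<in>\<Omega>. Y \<omega>' = Y \<omega>}"
    using card_subset_eq[OF _ sub] assms(1) by (auto simp: prb_def)
  also have "\<dots> \<longleftrightarrow> (\<forall>\<omega>'\<in>\<Omega>. Y \<omega>' = Y \<omega> \<longrightarrow> X \<omega>' = X \<omega>)" by auto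
  finally show ?thesis .
qed

lemma prb_pair_le: "finite \<Omega> \<Longrightarrow> prb \<Omega> (\<lambda>\<omega>. (X \<omega>, Y \<omega>)) (x, y) \<le> prb \<Omega> Y y"
  unfolding prb_def by (intro divide_right_mono) (auto intro!: card_mono)

text \<open>Each summand of the average formula is nonnegative and vanishes iff X is constant on the
  fiber of Y through the point.\<close>
lemma cond_ent_eq_0_iff:
  assumes "finite \<Omega>"
  shows "cond_ent \<Omega> X Y = 0 \<longleftrightarrow> (\<forall>\<omega>\<in>\<Omega>. \<forall>\<omega>'\<in>\<Omega>. Y \<omega> = Y \<omega>' \<longrightarrow> X \<omega> = X \<omega>')"
proof -
  define f where "f \<omega> = log 2 (prb \<Omega> Y (Y \<omega>)) - log 2 (prb \<Omega> (\<lambda>\<omega>. (X \<omega>, Y \<omega>)) (X \<omega>, Y \<omega>))"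
    for \<omega>
  have log_eq_iff: "log 2 a = log 2 b \<longleftrightarrow> a = b" if "a > 0" "b > 0" for a b :: real
    using that inj_on_eq_iff[OF log_inj[of 2], of a b] by simp
  have f_eq_0_iff: "f \<omega> = 0 \<longleftrightarrow> (\<forall>\<omega>'\<in>\<Omega>. Y \<omega>' = Y \<omega> \<longrightarrow> X \<omega>' = X \<omega>)" if "\<omega> \<in> \<Omega>" for \<omega>
    using prb_pair_eq_iff[OF assms that, of X Y] prb_pos[OF assms that, of Y]
      prb_pos[OF assms that, of "\<lambda>\<omega>. (X \<omega>, Y \<omega>)"] log_eq_iff by (auto simp: f_def)
  have f_nonneg: "f \<omega> \<ge> 0" if "\<omega> \<in> \<Omega>" for \<omega>
    using prb_pos[OF assms that, of "\<lambda>\<omega>. (X \<omega>, Y \<omega>)"] prb_pos[OF assms that, of Y]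
      prb_pair_le[OF assms, of X Y "X \<omega>" "Y \<omega>"]
    by (simp add: f_def)
  have "cond_ent \<Omega> X Y = 0 \<longleftrightarrow> sum f \<Omega> = 0"
    by (cases "\<Omega> = {}")
      (simp add: cond_ent_def ent_def, simp add: cond_ent_eq_average[OF assms] f_def assms)
  also have "\<dots> \<longleftrightarrow> (\<forall>\<omega>\<in>\<Omega>. f \<omega> = 0)"
    by (rule sum_nonneg_eq_0_iff[OF assms f_nonneg])
  also have "\<dots> \<longleftrightarrow> (\<forall>\<omega>\<in>\<Omega>. \<forall>\<omega>'\<in>\<Omega>. Y \<omega>' = Y \<omega> \<longrightarrow> X \<omega>' = X \<omega>)"
    using f_eq_0_iff by simp
  also have "\<dots> \<longleftrightarrow> (\<forall>\<omega>\<in>\<Omega>. \<forall>\<omega>'\<in>\<Omega>. Y \<omega> = Y \<omega>' \<longrightarrow> X \<omega> = X \<omega>')"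
    by blast
  finally show ?thesis .
qed

lemma mutual_info_eq_0_if_indep:
  assumes "finite \<Omega>"
    and "\<And>\<omega>. \<omega> \<in> \<Omega> \<Longrightarrow>
      prb \<Omega> (\<lambda>\<omega>. (X \<omega>, Y \<omega>)) (X \<omega>, Y \<omega>) = prb \<Omega> X (X \<omega>) * prb \<Omega> Y (Y \<omega>)"
  shows "mutual_info \<Omega> X Y = 0"
proof -
  have "log 2 (prb \<Omega> (\<lambda>\<omega>. (X \<omega>, Y \<omega>)) (X \<omega>, Y \<omega>)) - log 2 (prb \<Omega> X (X \<omega>))
      - log 2 (prb \<Omega> Y (Y \<omega>)) = 0" if "\<omega> \<in> \<Omega>" for \<omega>
    using assms(2)[OF that] prb_pos[OF assms(1) that, of X] prb_pos[OF assms(1) that, of Y]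
    by (simp add: log_mult)
  then show ?thesis by (simp add: mutual_info_eq_average[OF assms(1)])
qed

lemma sum_log_le:
  assumes "finite A" "\<And>a. a \<in> A \<Longrightarrow> q a > 0"
  shows "(\<Sum>a\<in>A. log 2 (q a)) \<le> ((\<Sum>a\<in>A. q a) - real (card A)) / ln 2"
proof -
  have "log 2 (q a) \<le> (q a - 1) / ln 2" if "a \<in> A" for a
    using ln_le_minus_one[OF assms(2)[OF that]] by (simp add: log_def divide_right_mono)
  then have "(\<Sum>a\<in>A. log 2 (q a)) \<le> (\<Sum>a\<in>A. (q a - 1) / ln 2)" by (rule sum_mono)
  also have "\<dots> = ((\<Sum>a\<in>A. q a) - real (card A)) / ln 2"
    by (simp add: sum_divide_distrib[symmetric] sum_subtractf)
  finally show ?thesis .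
qed

lemma sum_div_prb:
  assumes "finite \<Omega>"
  shows "(\<Sum>\<omega>\<in>\<Omega>. g (Z \<omega>) / prb \<Omega> Z (Z \<omega>)) = real (card \<Omega>) * (\<Sum>z\<in>Z ` \<Omega>. g z)"
proof -
  have "(\<Sum>\<omega>\<in>\<Omega>. g (Z \<omega>) / prb \<Omega> Z (Z \<omega>))
      = (\<Sum>z\<in>Z ` \<Omega>. real (fiber_card \<Omega> Z z) * (g z / prb \<Omega> Z z))"
    by (rule sum_image_fiber_card[OF assms, symmetric])
  also have "\<dots> = (\<Sum>z\<in>Z ` \<Omega>. real (card \<Omega>) * g z)"
  proof (rule sum.cong)
    fix z assume "z \<in> Z ` \<Omega>"
    then have "fiber_card \<Omega> Z z > 0" using fiber_card_pos[OF assms] by blast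
    then show "real (fiber_card \<Omega> Z z) * (g z / prb \<Omega> Z z) = real (card \<Omega>) * g z"
      by (simp add: prb_eq_fiber_card)
  qed simp
  finally show ?thesis by (simp add: sum_distrib_left)
qed

text \<open>Gibbs' inequality, via ln x \<le> x - 1: the product of the marginals has total mass at least 1
  on the joint support when the mutual information vanishes.\<close>
lemma mutual_info_eq_0_imp_product_mass_ge_1:
  assumes fin: "finite \<Omega>" "\<Omega> \<noteq> {}" and mi: "mutual_info \<Omega> X Y = 0"
  shows "1 \<le> (\<Sum>z\<in>(\<lambda>\<omega>. (X \<omega>, Y \<omega>)) ` \<Omega>. prb \<Omega> X (fst z) * prb \<Omega> Y (snd z))"
proof -
  define Z where "Z \<omega> = (X \<omega>, Y \<omega>)" for \<omega>
  define g where "g z = prb \<Omega> X (fst z) * prb \<Omega> Y (snd z)" for z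
  define q where "q \<omega> = g (Z \<omega>) / prb \<Omega> Z (Z \<omega>)" for \<omega>
  define d where "d \<omega> = log 2 (prb \<Omega> Z (Z \<omega>)) - log 2 (prb \<Omega> X (X \<omega>))
      - log 2 (prb \<Omega> Y (Y \<omega>))" for \<omega>
  have card_pos: "real (card \<Omega>) > 0" using fin card_gt_0_iff by fastforce
  have q_pos: "q \<omega> > 0" and log_q: "log 2 (q \<omega>) = - d \<omega>" if "\<omega> \<in> \<Omega>" for \<omega>
    using prb_pos[OF fin(1) that, of X] prb_pos[OF fin(1) that, of Y] prb_pos[OF fin(1) that, of Z]
    by (simp_all add: q_def g_def d_def Z_def log_mult log_divide)
  have "sum d \<Omega> = 0"
    using mi card_pos unfolding mutual_info_eq_average[OF fin(1)] d_def Z_def by simp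
  then have "(\<Sum>\<omega>\<in>\<Omega>. log 2 (q \<omega>)) = 0"
    by (simp add: log_q sum_negf)
  then have "0 \<le> ((\<Sum>\<omega>\<in>\<Omega>. q \<omega>) - real (card \<Omega>)) / ln 2"
    using sum_log_le[of \<Omega> q, OF fin(1) q_pos] by simp
  then have "real (card \<Omega>) * 1 \<le> (\<Sum>\<omega>\<in>\<Omega>. q \<omega>)"
    by (simp add: zero_le_divide_iff)
  also have "\<dots> = real (card \<Omega>) * (\<Sum>z\<in>Z ` \<Omega>. g z)"
    unfolding q_def by (rule sum_div_prb[OF fin(1)])
  finally show ?thesis
    using card_pos unfolding g_def Z_def by (simp only: mult_le_cancel_left_pos)
qed

lemma sum_product_prb:
  assumes "finite \<Omega>" "\<Omega> \<noteq> {}"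
  shows "(\<Sum>z\<in>X ` \<Omega> \<times> Y ` \<Omega>. prb \<Omega> X (fst z) * prb \<Omega> Y (snd z)) = 1"
proof -
  have "(\<Sum>z\<in>X ` \<Omega> \<times> Y ` \<Omega>. prb \<Omega> X (fst z) * prb \<Omega> Y (snd z))
      = (\<Sum>x\<in>X ` \<Omega>. prb \<Omega> X x) * (\<Sum>y\<in>Y ` \<Omega>. prb \<Omega> Y y)"
    by (simp add: sum_product sum.cartesian_product')
  then show ?thesis using sum_prb_image[OF assms, of X] sum_prb_image[OF assms, of Y] by simp
qed

text \<open>Otherwise the product of the marginals would put positive mass outside the joint support.\<close>
lemma mutual_info_eq_0_imp_joint:
  assumes fin: "finite \<Omega>" and mi: "mutual_info \<Omega> X Y = 0"
    and \<omega>\<^sub>0: "\<omega>\<^sub>0 \<in> \<Omega>" and \<omega>\<^sub>1: "\<omega>\<^sub>1 \<in> \<Omega>"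
  shows "\<exists>\<omega>\<in>\<Omega>. X \<omega> = X \<omega>\<^sub>0 \<and> Y \<omega> = Y \<omega>\<^sub>1"
proof (rule ccontr)
  assume missing: "\<not> ?thesis"
  define g where "g z = prb \<Omega> X (fst z) * prb \<Omega> Y (snd z)" for z
  have ne: "\<Omega> \<noteq> {}" using \<omega>\<^sub>0 by blast
  have "(\<Sum>z\<in>(\<lambda>\<omega>. (X \<omega>, Y \<omega>)) ` \<Omega>. g z) < (\<Sum>z\<in>X ` \<Omega> \<times> Y ` \<Omega>. g z)"
  proof (rule sum_strict_mono2)
    show "finite (X ` \<Omega> \<times> Y ` \<Omega>)" using fin by simp
    show "(\<lambda>\<omega>. (X \<omega>, Y \<omega>)) ` \<Omega> \<subseteq> X ` \<Omega> \<times> Y ` \<Omega>" by auto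
    show "(X \<omega>\<^sub>0, Y \<omega>\<^sub>1) \<in> X ` \<Omega> \<times> Y ` \<Omega> - (\<lambda>\<omega>. (X \<omega>, Y \<omega>)) ` \<Omega>"
      using missing \<omega>\<^sub>0 \<omega>\<^sub>1 by auto
    show "0 < g (X \<omega>\<^sub>0, Y \<omega>\<^sub>1)"
      using prb_pos[OF fin \<omega>\<^sub>0, of X] prb_pos[OF fin \<omega>\<^sub>1, of Y] by (simp add: g_def)
    show "0 \<le> g z" for z by (simp add: g_def prb_def)
  qed
  then show False
    using mutual_info_eq_0_imp_product_mass_ge_1[OF fin ne mi] sum_product_prb[OF fin ne, of X Y]
    by (simp add: g_def)
qed

section \<open>Independence by symmetry\<close>

lemma fiber_card_eq_sum_joint:
  assumes "finite \<Omega>"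
  shows "fiber_card \<Omega> X x = (\<Sum>y\<in>Y ` \<Omega>. card {\<omega>\<in>\<Omega>. X \<omega> = x \<and> Y \<omega> = y})"
proof -
  have "fiber_card \<Omega> X x = card (\<Union>y\<in>Y ` \<Omega>. {\<omega>\<in>\<Omega>. X \<omega> = x \<and> Y \<omega> = y})"
    unfolding fiber_card_def by (rule arg_cong[where f = card]) blast
  also have "\<dots> = (\<Sum>y\<in>Y ` \<Omega>. card {\<omega>\<in>\<Omega>. X \<omega> = x \<and> Y \<omega> = y})"
    using assms by (intro card_UN_disjoint) auto
  finally show ?thesis .
qed

lemma card_eq_sum_fiber_card:
  assumes "finite \<Omega>"
  shows "card \<Omega> = (\<Sum>x\<in>X ` \<Omega>. fiber_card \<Omega> X x)"
proof -
  have "card \<Omega> = card (\<Union>x\<in>X ` \<Omega>. {\<omega>\<in>\<Omega>. X \<omega> = x})"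
    by (rule arg_cong[where f = card]) blast
  also have "\<dots> = (\<Sum>x\<in>X ` \<Omega>. fiber_card \<Omega> X x)"
    unfolding fiber_card_def using assms by (intro card_UN_disjoint) auto
  finally show ?thesis .
qed

text \<open>Both marginal counts are sums of the joint counts, which do not depend on x.\<close>
lemma indep_if_joint_card_const:
  fixes \<Omega> :: "'a set" and X :: "'a \<Rightarrow> 'b" and Y :: "'a \<Rightarrow> 'c"
  defines "c x y \<equiv> card {\<omega>\<in>\<Omega>. X \<omega> = x \<and> Y \<omega> = y}"
  assumes fin: "finite \<Omega>"
    and const: "\<And>\<omega>\<^sub>0 \<omega>\<^sub>1 y. \<omega>\<^sub>0 \<in> \<Omega> \<Longrightarrow> \<omega>\<^sub>1 \<in> \<Omega> \<Longrightarrow> c (X \<omega>\<^sub>0) y = c (X \<omega>\<^sub>1) y"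
  shows "uniform_rv \<Omega> X" and "mutual_info \<Omega> X Y = 0"
proof -
  have fiber_X: "fiber_card \<Omega> X x = (\<Sum>y\<in>Y ` \<Omega>. c x y)" for x
    unfolding c_def by (rule fiber_card_eq_sum_joint[OF fin])
  have fiber_Y: "fiber_card \<Omega> Y y = (\<Sum>x\<in>X ` \<Omega>. c x y)" for y
  proof -
    have "fiber_card \<Omega> Y y = (\<Sum>x\<in>X ` \<Omega>. card {\<omega>\<in>\<Omega>. Y \<omega> = y \<and> X \<omega> = x})"
      by (rule fiber_card_eq_sum_joint[OF fin])
    also have "\<dots> = (\<Sum>x\<in>X ` \<Omega>. c x y)"
      unfolding c_def by (intro sum.cong refl arg_cong[where f = card]) blast
    finally show ?thesis .
  qed
  have fiber_X_const: "fiber_card \<Omega> X (X \<omega>\<^sub>0) = fiber_card \<Omega> X (X \<omega>\<^sub>1)"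
    if "\<omega>\<^sub>0 \<in> \<Omega>" "\<omega>\<^sub>1 \<in> \<Omega>" for \<omega>\<^sub>0 \<omega>\<^sub>1
    unfolding fiber_X by (rule sum.cong[OF refl const[OF that]])
  show "uniform_rv \<Omega> X"
    unfolding uniform_rv_def prb_eq_fiber_card
  proof (intro ballI)
    fix y y' assume "y \<in> X ` \<Omega>" "y' \<in> X ` \<Omega>"
    then obtain \<omega>\<^sub>0 \<omega>\<^sub>1 where "\<omega>\<^sub>0 \<in> \<Omega>" "\<omega>\<^sub>1 \<in> \<Omega>" "y = X \<omega>\<^sub>0" "y' = X \<omega>\<^sub>1" by blast
    then show "real (fiber_card \<Omega> X y) / real (card \<Omega>) = real (fiber_card \<Omega> X y') / real (card \<Omega>)"
      using fiber_X_const[of \<omega>\<^sub>0 \<omega>\<^sub>1] by simp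
  qed
  show "mutual_info \<Omega> X Y = 0"
  proof (rule mutual_info_eq_0_if_indep[OF fin])
    fix \<omega> assume \<omega>: "\<omega> \<in> \<Omega>"
    define N where "N = card (X ` \<Omega>)"
    have c_const: "c x y = c (X \<omega>) y" and fiber_const: "fiber_card \<Omega> X x = fiber_card \<Omega> X (X \<omega>)"
      if x: "x \<in> X ` \<Omega>" for x y
    proof -
      obtain \<omega>' where "\<omega>' \<in> \<Omega>" "x = X \<omega>'" using x by blast
      then show "c x y = c (X \<omega>) y" "fiber_card \<Omega> X x = fiber_card \<Omega> X (X \<omega>)"
        using const[OF _ \<omega>, of \<omega>' y] fiber_X_const[OF _ \<omega>, of \<omega>'] by simp_all
    qed
    have "fiber_card \<Omega> Y (Y \<omega>) = (\<Sum>x\<in>X ` \<Omega>. c (X \<omega>) (Y \<omega>))"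
      unfolding fiber_Y by (rule sum.cong[OF refl c_const])
    then have "fiber_card \<Omega> Y (Y \<omega>) = N * c (X \<omega>) (Y \<omega>)" by (simp add: N_def)
    moreover have "card \<Omega> = (\<Sum>x\<in>X ` \<Omega>. fiber_card \<Omega> X (X \<omega>))"
      unfolding card_eq_sum_fiber_card[OF fin, of X] by (rule sum.cong[OF refl fiber_const])
    then have "card \<Omega> = N * fiber_card \<Omega> X (X \<omega>)" by (simp add: N_def)
    ultimately have "card \<Omega> * c (X \<omega>) (Y \<omega>) = fiber_card \<Omega> X (X \<omega>) * fiber_card \<Omega> Y (Y \<omega>)"
      by (simp add: algebra_simps)
    then have "real (card \<Omega>) * real (c (X \<omega>) (Y \<omega>))
        = real (fiber_card \<Omega> X (X \<omega>)) * real (fiber_card \<Omega> Y (Y \<omega>))"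
      by (metis of_nat_mult)
    moreover have "fiber_card \<Omega> (\<lambda>\<omega>. (X \<omega>, Y \<omega>)) (X \<omega>, Y \<omega>) = c (X \<omega>) (Y \<omega>)"
      unfolding fiber_card_def c_def by simp
    moreover have "card \<Omega> > 0" using fin \<omega> card_gt_0_iff by blast
    ultimately show "prb \<Omega> (\<lambda>\<omega>. (X \<omega>, Y \<omega>)) (X \<omega>, Y \<omega>) = prb \<Omega> X (X \<omega>) * prb \<Omega> Y (Y \<omega>)"
      by (simp add: prb_eq_fiber_card divide_simps mult.commute)
  qed
qed

lemma joint_card_le_if_shift:
  assumes "finite \<Omega>" "inj_on \<tau> \<Omega>" "\<tau> ` \<Omega> \<subseteq> \<Omega>" "\<forall>\<omega>\<in>\<Omega>. Y (\<tau> \<omega>) = Y \<omega>"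
    "\<forall>\<omega>\<in>\<Omega>. X \<omega> = x\<^sub>0 \<longrightarrow> X (\<tau> \<omega>) = x\<^sub>1"
  shows "card {\<omega>\<in>\<Omega>. X \<omega> = x\<^sub>0 \<and> Y \<omega> = y} \<le> card {\<omega>\<in>\<Omega>. X \<omega> = x\<^sub>1 \<and> Y \<omega> = y}"
proof (rule card_inj_on_le)
  show "inj_on \<tau> {\<omega>\<in>\<Omega>. X \<omega> = x\<^sub>0 \<and> Y \<omega> = y}" using assms(2) by (rule inj_on_subset) auto
  show "\<tau> ` {\<omega>\<in>\<Omega>. X \<omega> = x\<^sub>0 \<and> Y \<omega> = y} \<subseteq> {\<omega>\<in>\<Omega>. X \<omega> = x\<^sub>1 \<and> Y \<omega> = y}"
    using assms(3-5) by auto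
  show "finite {\<omega>\<in>\<Omega>. X \<omega> = x\<^sub>1 \<and> Y \<omega> = y}" using assms(1) by simp
qed

lemma indep_if_shifts:
  assumes fin: "finite \<Omega>"
    and shifts: "\<And>\<omega>\<^sub>0 \<omega>\<^sub>1. \<omega>\<^sub>0 \<in> \<Omega> \<Longrightarrow> \<omega>\<^sub>1 \<in> \<Omega> \<Longrightarrow> \<exists>\<tau>. inj_on \<tau> \<Omega> \<and> \<tau> ` \<Omega> \<subseteq> \<Omega>
      \<and> (\<forall>\<omega>\<in>\<Omega>. Y (\<tau> \<omega>) = Y \<omega>) \<and> (\<forall>\<omega>\<in>\<Omega>. X \<omega> = X \<omega>\<^sub>0 \<longrightarrow> X (\<tau> \<omega>) = X \<omega>\<^sub>1)"
  shows "uniform_rv \<Omega> X" and "mutual_info \<Omega> X Y = 0"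
proof -
  have le: "card {\<omega>\<in>\<Omega>. X \<omega> = X \<omega>\<^sub>0 \<and> Y \<omega> = y} \<le> card {\<omega>\<in>\<Omega>. X \<omega> = X \<omega>\<^sub>1 \<and> Y \<omega> = y}"
    if \<omega>: "\<omega>\<^sub>0 \<in> \<Omega>" "\<omega>\<^sub>1 \<in> \<Omega>" for \<omega>\<^sub>0 \<omega>\<^sub>1 y
  proof -
    obtain \<tau> where "inj_on \<tau> \<Omega>" "\<tau> ` \<Omega> \<subseteq> \<Omega>" "\<forall>\<omega>\<in>\<Omega>. Y (\<tau> \<omega>) = Y \<omega>"
        "\<forall>\<omega>\<in>\<Omega>. X \<omega> = X \<omega>\<^sub>0 \<longrightarrow> X (\<tau> \<omega>) = X \<omega>\<^sub>1"
      using shifts[OF \<omega>] by blast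
    then show ?thesis by (rule joint_card_le_if_shift[OF fin])
  qed
  have eq: "card {\<omega>\<in>\<Omega>. X \<omega> = X \<omega>\<^sub>0 \<and> Y \<omega> = y} = card {\<omega>\<in>\<Omega>. X \<omega> = X \<omega>\<^sub>1 \<and> Y \<omega> = y}"
    if "\<omega>\<^sub>0 \<in> \<Omega>" "\<omega>\<^sub>1 \<in> \<Omega>" for \<omega>\<^sub>0 \<omega>\<^sub>1 y
    using le[OF that] le[OF that(2,1)] by (rule le_antisym)
  show "uniform_rv \<Omega> X" using fin eq by (rule indep_if_joint_card_const(1))
  show "mutual_info \<Omega> X Y = 0" using fin eq by (rule indep_if_joint_card_const(2))
qed

section \<open>Codes on the three-layer network\<close>

lemma finite_sample_space:
  assumes "finite S"
  shows "finite (sample_space S m)"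
proof (rule finite_subset)
  show "sample_space S m \<subseteq> (\<lambda>A v k. (v, k) \<in> A) ` Pow (S \<times> {..<m})"
  proof
    fix \<omega> assume "\<omega> \<in> sample_space S m"
    then have "{(v, k). \<omega> v k} \<in> Pow (S \<times> {..<m})"
      unfolding sample_space_def by (auto simp: not_le[symmetric])
    moreover have "\<omega> = (\<lambda>v k. (v, k) \<in> {(v, k). \<omega> v k})" by simp
    ultimately show "\<omega> \<in> (\<lambda>A v k. (v, k) \<in> A) ` Pow (S \<times> {..<m})" by blast
  qed
  show "finite ((\<lambda>A v k. (v, k) \<in> A) ` Pow (S \<times> {..<m}))" using assms by simp
qed

lemma zero_outcome_in_sample_space: "(\<lambda>_ _. False) \<in> sample_space S m"
  by (simp add: sample_space_def)

lemma sample_space_nonempty: "sample_space S m \<noteq> {}"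
  using zero_outcome_in_sample_space by blast

lemma sample_space_non_source: "\<omega> \<in> sample_space S m \<Longrightarrow> v \<notin> S \<Longrightarrow> \<omega> v = (\<lambda>_. False)"
  by (auto simp: sample_space_def)

lemma msgs_eq_iff: "msgs X A \<omega> = msgs X A \<omega>' \<longleftrightarrow> (\<forall>e\<in>A. X \<omega> e = X \<omega>' e)"
  unfolding msgs_def fun_eq_iff by metis

lemma is_code_local:
  assumes "is_code E c S n m X" "e \<in> E" "\<omega> \<in> sample_space S m" "\<omega>' \<in> sample_space S m"
    "\<forall>e'\<in>In_edges E (fst e). X \<omega> e' = X \<omega>' e'" "\<omega> (fst e) = \<omega>' (fst e)"
  shows "X \<omega> e = X \<omega>' e"
  using assms unfolding is_code_def by blast

lemma In_edges_ex_Src: "In_edges (ex_edges r) (Src j) = {}"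
  by (auto simp: In_edges_def ex_edges_def)

lemma In_edges_ex_Unode: "i \<in> {1..r} \<Longrightarrow> In_edges (ex_edges r) (Unode i) = {(Src i, Unode i)}"
  by (auto simp: In_edges_def ex_edges_def)

lemma In_edges_ex_Ubar:
  "i \<in> {1..r} \<Longrightarrow> In_edges (ex_edges r) (Ubar i) = (\<lambda>j. (Src j, Ubar i)) ` ({1..r} - {i})"
  by (auto simp: In_edges_def ex_edges_def)

lemma In_edges_ex_Dst:
  "i \<in> {1..r} \<Longrightarrow> In_edges (ex_edges r) (Dst i) = {(Unode i, Dst i), (Ubar i, Dst i)}"
  by (auto simp: In_edges_def ex_edges_def)

lemma ex_edges_mem:
  "i \<in> {1..r} \<Longrightarrow> (Src i, Unode i) \<in> ex_edges r"
  "i \<in> {1..r} \<Longrightarrow> (Unode i, Dst i) \<in> ex_edges r"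
  "i \<in> {1..r} \<Longrightarrow> (Ubar i, Dst i) \<in> ex_edges r"
  "i \<in> {1..r} \<Longrightarrow> j \<in> {1..r} \<Longrightarrow> i \<noteq> j \<Longrightarrow> (Src j, Ubar i) \<in> ex_edges r"
  by (auto simp: ex_edges_def)

lemma Src_in_ex_sources_iff: "Src i \<in> ex_sources r \<longleftrightarrow> i \<in> {1..r}"
  by (auto simp: ex_sources_def)

lemma non_sources_ex: "Unode i \<notin> ex_sources r" "Ubar i \<notin> ex_sources r"
  by (auto simp: ex_sources_def)

lemma Dst_in_ex_terminals: "i \<in> {1..r} \<Longrightarrow> Dst i \<in> ex_terminals r"
  by (simp add: ex_terminals_def)

lemma In_edges_in_ex_wiretap:
  "i \<in> {1..r} \<Longrightarrow> In_edges (ex_edges r) (Unode i) \<in> ex_wiretap r"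
  "i \<in> {1..r} \<Longrightarrow> In_edges (ex_edges r) (Ubar i) \<in> ex_wiretap r"
  by (simp_all add: ex_wiretap_def)

lemma finite_ex_sample_space: "finite (sample_space (ex_sources r) m)"
  by (rule finite_sample_space) (simp add: ex_sources_def)

lemma ex_alphabet_size: "nat \<lfloor>2 powr (ex_cap e * real n)\<rfloor> = 2 ^ n"
  by (simp add: ex_cap_def powr_realpow)

lemma ex_code_less:
  assumes "is_code (ex_edges r) ex_cap S n m X" "e \<in> ex_edges r" "\<omega> \<in> sample_space S m"
  shows "X \<omega> e < 2 ^ n"
  using assms ex_alphabet_size unfolding is_code_def by metis

context
  fixes r n m :: nat and c and X
  assumes code: "is_code (ex_edges r) c (ex_sources r) n m X"
begin

lemma ex_code_Src_edge:
  assumes "(Src j, w) \<in> ex_edges r" "\<omega> \<in> sample_space (ex_sources r) m"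
    "\<omega>' \<in> sample_space (ex_sources r) m" "\<omega> (Src j) = \<omega>' (Src j)"
  shows "X \<omega> (Src j, w) = X \<omega>' (Src j, w)"
  using is_code_local[OF code assms(1-3)] assms(4) by (simp add: In_edges_ex_Src)

lemma ex_code_Unode_edge:
  assumes "i \<in> {1..r}" "\<omega> \<in> sample_space (ex_sources r) m" "\<omega>' \<in> sample_space (ex_sources r) m"
    "X \<omega> (Src i, Unode i) = X \<omega>' (Src i, Unode i)"
  shows "X \<omega> (Unode i, Dst i) = X \<omega>' (Unode i, Dst i)"
  using is_code_local[OF code ex_edges_mem(2)[OF assms(1)] assms(2,3)] assms(4)
    sample_space_non_source[OF assms(2) non_sources_ex(1)]
    sample_space_non_source[OF assms(3) non_sources_ex(1)]
  by (simp add: In_edges_ex_Unode[OF assms(1)])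

lemma ex_code_Ubar_edge:
  assumes "i \<in> {1..r}" "\<omega> \<in> sample_space (ex_sources r) m" "\<omega>' \<in> sample_space (ex_sources r) m"
    "\<forall>j\<in>{1..r} - {i}. X \<omega> (Src j, Ubar i) = X \<omega>' (Src j, Ubar i)"
  shows "X \<omega> (Ubar i, Dst i) = X \<omega>' (Ubar i, Dst i)"
  using is_code_local[OF code ex_edges_mem(3)[OF assms(1)] assms(2,3)] assms(4)
    sample_space_non_source[OF assms(2) non_sources_ex(2)]
    sample_space_non_source[OF assms(3) non_sources_ex(2)]
  by (simp add: In_edges_ex_Ubar[OF assms(1)])

text \<open>The hybrid outcome taking the bits of s_i from \<omega> and all other bits from \<omega>' sends the same
  messages into d_i as \<omega>; since d_i decodes M, the bits of M away from s_i agree in \<omega> and \<omega>'.\<close>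
lemma ex_decoded_bits_eq:
  assumes i: "i \<in> {1..r}"
    and decode: "cond_ent (sample_space (ex_sources r) m) (bits_rv M)
      (msgs X (In_edges (ex_edges r) (Dst i))) = 0"
    and \<omega>: "\<omega> \<in> sample_space (ex_sources r) m" "\<omega>' \<in> sample_space (ex_sources r) m"
    and Ubar_eq: "X \<omega> (Ubar i, Dst i) = X \<omega>' (Ubar i, Dst i)"
    and "(v, t) \<in> M" "v \<noteq> Src i"
  shows "\<omega> v t = \<omega>' v t"
proof -
  define \<omega>\<^sub>h where "\<omega>\<^sub>h = \<omega>'(Src i := \<omega> (Src i))"
  have \<omega>\<^sub>h: "\<omega>\<^sub>h \<in> sample_space (ex_sources r) m"
    using \<omega> unfolding \<omega>\<^sub>h_def sample_space_def by auto
  have "X \<omega>\<^sub>h (Src i, Unode i) = X \<omega> (Src i, Unode i)"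
    using ex_code_Src_edge[OF ex_edges_mem(1)[OF i] \<omega>\<^sub>h \<omega>(1)] by (simp add: \<omega>\<^sub>h_def)
  then have "X \<omega>\<^sub>h (Unode i, Dst i) = X \<omega> (Unode i, Dst i)"
    by (rule ex_code_Unode_edge[OF i \<omega>\<^sub>h \<omega>(1)])
  moreover have "X \<omega>\<^sub>h (Ubar i, Dst i) = X \<omega> (Ubar i, Dst i)"
  proof -
    have "X \<omega>\<^sub>h (Src j, Ubar i) = X \<omega>' (Src j, Ubar i)" if "j \<in> {1..r} - {i}" for j
      using that ex_code_Src_edge[OF ex_edges_mem(4)[OF i] \<omega>\<^sub>h \<omega>(2)] by (simp add: \<omega>\<^sub>h_def)
    then show ?thesis using ex_code_Ubar_edge[OF i \<omega>\<^sub>h \<omega>(2)] Ubar_eq by simp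
  qed
  ultimately have "msgs X (In_edges (ex_edges r) (Dst i)) \<omega>\<^sub>h = msgs X (In_edges (ex_edges r) (Dst i)) \<omega>"
    by (simp add: msgs_eq_iff In_edges_ex_Dst[OF i])
  then have "bits_rv M \<omega>\<^sub>h = bits_rv M \<omega>"
    using decode[unfolded cond_ent_eq_0_iff[OF finite_ex_sample_space]] \<omega>\<^sub>h \<omega>(1) by blast
  then have "bits_rv M \<omega>\<^sub>h (v, t) = bits_rv M \<omega> (v, t)" by simp
  then show ?thesis using assms(6,7) by (simp add: bits_rv_def \<omega>\<^sub>h_def)
qed

text \<open>If the copies \<nu>, \<nu>' of the bits of s_j in \<omega>, \<omega>' send the same message on (ubar_i, d_i),
  then d_i sees that the bits of M at s_j agree; with equal inputs at ubar_j, the terminal d_j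
  then decodes the same M, hence the same key.\<close>
lemma ex_key_eq_if_copies_agree:
  assumes i: "i \<in> {1..r}" and j: "j \<in> {1..r}" "j \<noteq> i"
    and decode: "\<And>j. j \<in> {1..r} \<Longrightarrow> cond_ent (sample_space (ex_sources r) m) (bits_rv M)
      (msgs X (In_edges (ex_edges r) (Dst j))) = 0"
    and key: "cond_ent (sample_space (ex_sources r) m) K (bits_rv M) = 0"
    and \<nu>: "\<nu> \<in> sample_space (ex_sources r) m" "\<nu>' \<in> sample_space (ex_sources r) m"
    and copies_eq: "X \<nu> (Ubar i, Dst i) = X \<nu>' (Ubar i, Dst i)"
    and \<omega>: "\<omega> \<in> sample_space (ex_sources r) m" "\<omega>' \<in> sample_space (ex_sources r) m"
    and copies: "\<nu> (Src j) = \<omega> (Src j)" "\<nu>' (Src j) = \<omega>' (Src j)"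
    and inputs_eq: "msgs X (In_edges (ex_edges r) (Ubar j)) \<omega> = msgs X (In_edges (ex_edges r) (Ubar j)) \<omega>'"
  shows "K \<omega> = K \<omega>'"
proof -
  have own_bits_eq: "\<omega> (Src j) t = \<omega>' (Src j) t" if "(Src j, t) \<in> M" for t
    using ex_decoded_bits_eq[OF i decode[OF i] \<nu> copies_eq that] j(2) copies by simp
  have Ubar_eq: "X \<omega> (Ubar j, Dst j) = X \<omega>' (Ubar j, Dst j)"
    using inputs_eq ex_code_Ubar_edge[OF j(1) \<omega>] by (simp add: msgs_eq_iff In_edges_ex_Ubar[OF j(1)])
  have "bits_rv M \<omega> = bits_rv M \<omega>'"
  proof (rule ext, clarify)
    fix v t
    show "bits_rv M \<omega> (v, t) = bits_rv M \<omega>' (v, t)"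
      using ex_decoded_bits_eq[OF j(1) decode[OF j(1)] \<omega> Ubar_eq, of v t] own_bits_eq
      by (cases "v = Src j") (auto simp: bits_rv_def)
  qed
  then show ?thesis using key[unfolded cond_ent_eq_0_iff[OF finite_ex_sample_space]] \<omega> by blast
qed

end

definition glue_sources :: "(nat \<Rightarrow> node outcome) \<Rightarrow> node outcome" where
  "glue_sources \<psi> v = (case v of Src j \<Rightarrow> \<psi> j (Src j) | _ \<Rightarrow> (\<lambda>_. False))"

lemma glue_sources_in_sample_space:
  assumes "\<And>j. \<psi> j \<in> sample_space S m"
  shows "glue_sources \<psi> \<in> sample_space S m"
  using assms unfolding sample_space_def glue_sources_def by (auto split: node.split)

text \<open>Pick, for every key value k, an outcome with key k whose message into u_i is that of the
  all-zero outcome (possible by secrecy at u_i). Then k is decoded at d_i from the message on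
  (ubar_i, d_i) alone, which takes at most 2^n values.\<close>
lemma ex_card_key_le:
  fixes r m :: nat and K :: "node outcome \<Rightarrow> 'k"
  defines "\<Omega> \<equiv> sample_space (ex_sources r) m"
  assumes i: "i \<in> {1..r}" and code: "is_code (ex_edges r) ex_cap (ex_sources r) n m X"
    and decode: "cond_ent \<Omega> K (msgs X (In_edges (ex_edges r) (Dst i))) = 0"
    and secret: "mutual_info \<Omega> K (msgs X (In_edges (ex_edges r) (Unode i))) = 0"
  shows "card (K ` \<Omega>) \<le> 2 ^ n"
proof -
  define \<omega>\<^sub>0 :: "node outcome" where "\<omega>\<^sub>0 = (\<lambda>_ _. False)"
  define P where "P = msgs X (In_edges (ex_edges r) (Unode i))"
  have fin: "finite \<Omega>" and \<omega>\<^sub>0: "\<omega>\<^sub>0 \<in> \<Omega>"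
    by (simp_all add: \<Omega>_def \<omega>\<^sub>0_def finite_ex_sample_space zero_outcome_in_sample_space)
  have "\<forall>k\<in>K ` \<Omega>. \<exists>\<omega>\<in>\<Omega>. K \<omega> = k \<and> P \<omega> = P \<omega>\<^sub>0"
    using mutual_info_eq_0_imp_joint[OF fin secret[folded P_def] _ \<omega>\<^sub>0] by blast
  then obtain \<phi> where \<phi>: "\<And>k. k \<in> K ` \<Omega> \<Longrightarrow> \<phi> k \<in> \<Omega> \<and> K (\<phi> k) = k \<and> P (\<phi> k) = P \<omega>\<^sub>0"
    by metis
  have "inj_on (\<lambda>k. X (\<phi> k) (Ubar i, Dst i)) (K ` \<Omega>)"
  proof (rule inj_onI)
    fix k k' assume k: "k \<in> K ` \<Omega>" "k' \<in> K ` \<Omega>"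
      and Ubar_eq: "X (\<phi> k) (Ubar i, Dst i) = X (\<phi> k') (Ubar i, Dst i)"
    have "X (\<phi> k) (Src i, Unode i) = X (\<phi> k') (Src i, Unode i)"
      using \<phi>[OF k(1)] \<phi>[OF k(2)] by (simp add: P_def msgs_eq_iff In_edges_ex_Unode[OF i])
    then have "X (\<phi> k) (Unode i, Dst i) = X (\<phi> k') (Unode i, Dst i)"
      using ex_code_Unode_edge[OF code i] \<phi>[OF k(1)] \<phi>[OF k(2)] by (simp add: \<Omega>_def)
    then have "msgs X (In_edges (ex_edges r) (Dst i)) (\<phi> k) = msgs X (In_edges (ex_edges r) (Dst i)) (\<phi> k')"
      using Ubar_eq by (simp add: msgs_eq_iff In_edges_ex_Dst[OF i])
    then have "K (\<phi> k) = K (\<phi> k')"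
      using decode[unfolded cond_ent_eq_0_iff[OF fin]] \<phi>[OF k(1)] \<phi>[OF k(2)] by blast
    then show "k = k'" using \<phi>[OF k(1)] \<phi>[OF k(2)] by simp
  qed
  moreover have "(\<lambda>k. X (\<phi> k) (Ubar i, Dst i)) ` (K ` \<Omega>) \<subseteq> {..<2 ^ n}"
    using ex_code_less[OF code ex_edges_mem(3)[OF i]] \<phi> by (auto simp: \<Omega>_def)
  ultimately show ?thesis using card_inj_on_le[of _ "K ` \<Omega>" "{..<2 ^ n}"] by fastforce
qed

text \<open>Fix for every j \<noteq> i and key value k an outcome \<phi> j k with key k whose inputs at ubar_j
  are those of the all-zero outcome. Gluing the bits of each s_j from \<phi> j (t j) maps a tuple t
  of key values injectively (ex_key_eq_if_copies_agree) to the message on (ubar_i, d_i).\<close>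
lemma ex_card_key_pow_le:
  fixes r m :: nat and K :: "node outcome \<Rightarrow> 'k"
  defines "\<Omega> \<equiv> sample_space (ex_sources r) m"
  assumes i: "i \<in> {1..r}" and code: "is_code (ex_edges r) ex_cap (ex_sources r) n m X"
    and decode: "\<And>j. j \<in> {1..r} \<Longrightarrow>
      cond_ent \<Omega> (bits_rv M) (msgs X (In_edges (ex_edges r) (Dst j))) = 0"
    and key: "cond_ent \<Omega> K (bits_rv M) = 0"
    and secret: "\<And>j. j \<in> {1..r} \<Longrightarrow> mutual_info \<Omega> K (msgs X (In_edges (ex_edges r) (Ubar j))) = 0"
  shows "card (K ` \<Omega>) ^ (r - 1) \<le> 2 ^ n"
proof -
  define \<omega>\<^sub>0 :: "node outcome" where "\<omega>\<^sub>0 = (\<lambda>_ _. False)"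
  define P where "P j = msgs X (In_edges (ex_edges r) (Ubar j))" for j
  define J where "J = {1..r} - {i}"
  define T where "T = (\<Pi>\<^sub>E j\<in>J. K ` \<Omega>)"
  have fin: "finite \<Omega>" and \<omega>\<^sub>0: "\<omega>\<^sub>0 \<in> \<Omega>"
    by (simp_all add: \<Omega>_def \<omega>\<^sub>0_def finite_ex_sample_space zero_outcome_in_sample_space)
  have "\<forall>j\<in>J. \<forall>k\<in>K ` \<Omega>. \<exists>\<omega>\<in>\<Omega>. K \<omega> = k \<and> P j \<omega> = P j \<omega>\<^sub>0"
    using mutual_info_eq_0_imp_joint[OF fin secret[folded P_def] _ \<omega>\<^sub>0] by (auto simp: J_def)
  then obtain \<phi> where \<phi>: "\<And>j k. j \<in> J \<Longrightarrow> k \<in> K ` \<Omega> \<Longrightarrow>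
      \<phi> j k \<in> \<Omega> \<and> K (\<phi> j k) = k \<and> P j (\<phi> j k) = P j \<omega>\<^sub>0"
    by metis
  define glued where "glued t = glue_sources (\<lambda>j. if j \<in> J then \<phi> j (t j) else \<omega>\<^sub>0)" for t
  have glued: "glued t \<in> \<Omega>" if "t \<in> T" for t
    unfolding glued_def \<Omega>_def
    by (rule glue_sources_in_sample_space) (use that \<phi> \<omega>\<^sub>0 in \<open>auto simp: T_def \<Omega>_def\<close>)
  have "inj_on (\<lambda>t. X (glued t) (Ubar i, Dst i)) T"
  proof (rule inj_onI)
    fix t s assume t: "t \<in> T" and s: "s \<in> T"
      and Ubar_eq: "X (glued t) (Ubar i, Dst i) = X (glued s) (Ubar i, Dst i)"
    show "t = s"
    proof (rule PiE_ext[OF t[unfolded T_def] s[unfolded T_def]])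
      fix j assume "j \<in> J"
      then have j: "j \<in> {1..r}" "j \<noteq> i" "t j \<in> K ` \<Omega>" "s j \<in> K ` \<Omega>"
        using t s by (auto simp: T_def J_def)
      have "K (\<phi> j (t j)) = K (\<phi> j (s j))"
        by (rule ex_key_eq_if_copies_agree[OF code i j(1,2) decode[unfolded \<Omega>_def]
              key[unfolded \<Omega>_def] glued[OF t, unfolded \<Omega>_def] glued[OF s, unfolded \<Omega>_def] Ubar_eq])
          (use \<phi>[OF \<open>j \<in> J\<close> j(3)] \<phi>[OF \<open>j \<in> J\<close> j(4)] \<open>j \<in> J\<close>
            in \<open>simp_all add: glued_def glue_sources_def P_def \<Omega>_def\<close>)
      then show "t j = s j" using \<phi>[OF \<open>j \<in> J\<close> j(3)] \<phi>[OF \<open>j \<in> J\<close> j(4)] by simp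
    qed
  qed
  moreover have "(\<lambda>t. X (glued t) (Ubar i, Dst i)) ` T \<subseteq> {..<2 ^ n}"
    using ex_code_less[OF code ex_edges_mem(3)[OF i]] glued by (auto simp: \<Omega>_def)
  ultimately have "card T \<le> 2 ^ n" using card_inj_on_le[of _ T "{..<2 ^ n}"] by fastforce
  moreover have "card T = card (K ` \<Omega>) ^ (r - 1)"
    using i by (simp add: T_def J_def card_PiE)
  ultimately show ?thesis by simp
qed

section \<open>Upper bounds on the key rates\<close>

lemma rate_le_of_card_pow_le:
  assumes fin: "finite \<Omega>" "\<Omega> \<noteq> {}" and unif: "uniform_rv \<Omega> K"
    and rate: "R * real n \<le> ent \<Omega> K" and card: "card (K ` \<Omega>) ^ k \<le> 2 ^ n"
    and pos: "0 < n" "0 < k"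
  shows "R \<le> 1 / real k"
proof -
  define N where "N = card (K ` \<Omega>)"
  have "N > 0" using fin by (simp add: N_def card_gt_0_iff)
  have "real k * ent \<Omega> K = log 2 (real N ^ k)"
    using ent_uniform_rv[OF fin unif] \<open>N > 0\<close> by (simp add: N_def log_nat_power)
  also have "\<dots> \<le> log 2 (2 ^ n)"
  proof -
    have "real N ^ k \<le> 2 ^ n" using card by (metis N_def of_nat_le_iff of_nat_numeral of_nat_power)
    then show ?thesis using \<open>N > 0\<close> by (subst log_le_cancel_iff) (auto simp del: log_pow_cancel)
  qed
  also have "\<dots> = real n" by simp
  finally have "real k * (R * real n) \<le> 1 * real n"
    using rate pos(2) by (smt (verit) mult_left_mono of_nat_0_le_iff)
  then have "real k * R \<le> 1" using pos(1) by (simp only: mult.assoc[symmetric] mult_le_cancel_right)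
  then show ?thesis using pos(2) by (simp add: field_simps)
qed

lemma rate_le_if_feasible_le:
  fixes R b :: real and F :: "real \<Rightarrow> nat \<Rightarrow> bool"
  assumes achievable: "\<forall>\<Delta>>0. infinite {n. F (R - \<Delta>) n}"
    and bound: "\<And>R' n. 0 < n \<Longrightarrow> F R' n \<Longrightarrow> R' \<le> b"
  shows "R \<le> b"
proof (rule ccontr)
  assume "\<not> R \<le> b"
  then have "infinite {n. F (R - (R - b) / 2) n}" using achievable by simp
  then obtain n where "n \<noteq> 0" and feasible: "F (R - (R - b) / 2) n"
    using finite_subset[of "{n. F (R - (R - b) / 2) n}" "{0}"] by blast
  from \<open>n \<noteq> 0\<close> have "0 < n" by simp
  from this feasible have "R - (R - b) / 2 \<le> b" by (rule bound)
  then show False using \<open>\<not> R \<le> b\<close> by (simp add: field_simps)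
qed

lemma ex_key_feasible_rate_le:
  assumes "1 \<le> r" "0 < n" "key_feasible (ex_edges r) ex_cap (ex_sources r) (ex_terminals r) (ex_wiretap r) R n"
  shows "R \<le> 1"
proof -
  from assms(3) obtain m X and K :: "node outcome \<Rightarrow> nat"
    where code: "is_code (ex_edges r) ex_cap (ex_sources r) n m X"
      and unif: "uniform_rv (sample_space (ex_sources r) m) K"
      and rate: "R * real n \<le> ent (sample_space (ex_sources r) m) K"
      and decode: "\<forall>d\<in>ex_terminals r. cond_ent (sample_space (ex_sources r) m) K (msgs X (In_edges (ex_edges r) d)) = 0"
      and secret: "\<forall>\<beta>\<in>ex_wiretap r. mutual_info (sample_space (ex_sources r) m) K (msgs X \<beta>) = 0"
    unfolding key_feasible_def by blast
  have one: "1 \<in> {1..r}" using assms(1) by simp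
  have "card (K ` sample_space (ex_sources r) m) ^ 1 \<le> 2 ^ n"
    using ex_card_key_le[OF one code decode[rule_format, OF Dst_in_ex_terminals[OF one]]
        secret[rule_format, OF In_edges_in_ex_wiretap(1)[OF one]]] by simp
  from rate_le_of_card_pow_le[OF finite_ex_sample_space sample_space_nonempty unif rate this assms(2)]
  show ?thesis by simp
qed

lemma ex_key2_feasible_rate_le:
  assumes "2 \<le> r" "0 < n" "key2_feasible (ex_edges r) ex_cap (ex_sources r) (ex_terminals r) (ex_wiretap r) R n"
  shows "R \<le> 1 / (real r - 1)"
proof -
  from assms(3) obtain m X M and K :: "node outcome \<Rightarrow> nat"
    where code: "is_code (ex_edges r) ex_cap (ex_sources r) n m X"
      and unif: "uniform_rv (sample_space (ex_sources r) m) K"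
      and rate: "R * real n \<le> ent (sample_space (ex_sources r) m) K"
      and decode: "\<forall>d\<in>ex_terminals r. cond_ent (sample_space (ex_sources r) m) (bits_rv M) (msgs X (In_edges (ex_edges r) d)) = 0"
      and key: "cond_ent (sample_space (ex_sources r) m) K (bits_rv M) = 0"
      and secret: "\<forall>\<beta>\<in>ex_wiretap r. mutual_info (sample_space (ex_sources r) m) K (msgs X \<beta>) = 0"
    unfolding key2_feasible_def by blast
  have one: "1 \<in> {1..r}" using assms(1) by simp
  have "card (K ` sample_space (ex_sources r) m) ^ (r - 1) \<le> 2 ^ n"
    using ex_card_key_pow_le[OF one code decode[rule_format, OF Dst_in_ex_terminals] key
        secret[rule_format, OF In_edges_in_ex_wiretap(2)]] .
  from rate_le_of_card_pow_le[OF finite_ex_sample_space sample_space_nonempty unif rate this assms(2)]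
  show ?thesis using assms(1) by (simp add: of_nat_diff)
qed

lemma ex_key_achievable_rate_le:
  assumes "2 \<le> r" "key_rate_achievable (ex_edges r) ex_cap (ex_sources r) (ex_terminals r) (ex_wiretap r) R"
  shows "R \<le> 1"
  using assms(2) unfolding key_rate_achievable_def
proof (rule rate_le_if_feasible_le)
  fix R' n
  assume "0 < n" "key_feasible (ex_edges r) ex_cap (ex_sources r) (ex_terminals r) (ex_wiretap r) R' n"
  with assms(1) show "R' \<le> 1" by (intro ex_key_feasible_rate_le) auto
qed

lemma ex_key2_achievable_rate_le:
  assumes "2 \<le> r" "key2_rate_achievable (ex_edges r) ex_cap (ex_sources r) (ex_terminals r) (ex_wiretap r) R"
  shows "R \<le> 1 / (real r - 1)"
  using assms(2) unfolding key2_rate_achievable_def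
proof (rule rate_le_if_feasible_le)
  fix R' n
  assume "0 < n" "key2_feasible (ex_edges r) ex_cap (ex_sources r) (ex_terminals r) (ex_wiretap r) R' n"
  with assms(1) show "R' \<le> 1 / (real r - 1)" by (rule ex_key2_feasible_rate_le)
qed

section \<open>The XOR code\<close>

definition bits_to_nat :: "nat \<Rightarrow> (nat \<Rightarrow> bool) \<Rightarrow> nat" where
  "bits_to_nat n f = horner_sum of_bool 2 (map f [0..<n])"

lemma bit_bits_to_nat_iff: "bit (bits_to_nat n f) k \<longleftrightarrow> k < n \<and> f k"
  by (auto simp: bits_to_nat_def bit_horner_sum_bit_iff)

lemma bits_to_nat_less: "bits_to_nat n f < 2 ^ n"
proof -
  have "bits_to_nat n f = take_bit n (bits_to_nat n f)"
    by (simp add: bits_to_nat_def take_bit_horner_sum_bit_eq)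
  then show ?thesis by (metis take_bit_nat_less_exp)
qed

lemma bits_to_nat_eq_iff: "bits_to_nat n f = bits_to_nat n g \<longleftrightarrow> (\<forall>k<n. f k = g k)"
  by (auto simp: bit_eq_iff bit_bits_to_nat_iff)

lemma bits_to_nat_bit: "x < 2 ^ n \<Longrightarrow> bits_to_nat n (bit x) = x"
  by (simp add: bits_to_nat_def horner_sum_bit_eq_take_bit take_bit_nat_eq_self)

definition src_parity :: "nat set \<Rightarrow> node outcome \<Rightarrow> nat \<Rightarrow> bool" where
  "src_parity A \<omega> k = odd (card {i\<in>A. \<omega> (Src i) k})"

lemma src_parity_remove:
  assumes "finite A" "i \<in> A"
  shows "src_parity A \<omega> k = (src_parity (A - {i}) \<omega> k \<noteq> \<omega> (Src i) k)"
proof (cases "\<omega> (Src i) k")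
  case True
  then have "{j\<in>A. \<omega> (Src j) k} = insert i {j\<in>A - {i}. \<omega> (Src j) k}" using assms by auto
  then show ?thesis using True assms by (simp add: src_parity_def)
next
  case False
  then have "{j\<in>A. \<omega> (Src j) k} = {j\<in>A - {i}. \<omega> (Src j) k}" using assms by auto
  then show ?thesis using False by (simp add: src_parity_def)
qed

lemma src_parity_cong:
  "(\<And>i. i \<in> A \<Longrightarrow> \<omega> (Src i) k = \<omega>' (Src i) k) \<Longrightarrow> src_parity A \<omega> k = src_parity A \<omega>' k"
  unfolding src_parity_def by (metis (mono_tags, lifting) Collect_cong)

text \<open>n parallel copies of the code of the informal statement: the message on an edge leaving
  ubar_i is the XOR of its inputs, and the key is the XOR of all source bits.\<close>
definition xor_code :: "nat \<Rightarrow> nat \<Rightarrow> node outcome \<Rightarrow> node \<times> node \<Rightarrow> nat" where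
  "xor_code r n \<omega> e = (case fst e of
      Src j \<Rightarrow> bits_to_nat n (\<omega> (Src j))
    | Unode i \<Rightarrow> bits_to_nat n (\<omega> (Src i))
    | Ubar i \<Rightarrow> bits_to_nat n (src_parity ({1..r} - {i}) \<omega>)
    | Dst _ \<Rightarrow> 0)"

definition xor_key :: "nat \<Rightarrow> nat \<Rightarrow> node outcome \<Rightarrow> nat" where
  "xor_key r n \<omega> = bits_to_nat n (src_parity {1..r} \<omega>)"

lemma is_code_xor_code: "is_code (ex_edges r) ex_cap (ex_sources r) n n (xor_code r n)"
  unfolding is_code_def ex_alphabet_size
proof (intro conjI ballI impI)
  fix \<omega> e show "xor_code r n \<omega> e < 2 ^ n"
    by (auto simp: xor_code_def bits_to_nat_less split: node.split)
next
  fix e \<omega> \<omega>' assume e: "e \<in> ex_edges r"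
    and local: "(\<forall>e'\<in>In_edges (ex_edges r) (fst e). xor_code r n \<omega> e' = xor_code r n \<omega>' e')
      \<and> \<omega> (fst e) = \<omega>' (fst e)"
  from e consider (Src_Unode) i where "e = (Src i, Unode i)"
    | (Src_Ubar) i j where "e = (Src j, Ubar i)"
    | (Unode_Dst) i where "e = (Unode i, Dst i)" "i \<in> {1..r}"
    | (Ubar_Dst) i where "e = (Ubar i, Dst i)" "i \<in> {1..r}"
    unfolding ex_edges_def by blast
  then show "xor_code r n \<omega> e = xor_code r n \<omega>' e"
  proof cases
    case (Unode_Dst i)
    then show ?thesis using local by (simp add: In_edges_ex_Unode xor_code_def)
  next
    case (Ubar_Dst i)
    then have "\<forall>j\<in>{1..r} - {i}. bits_to_nat n (\<omega> (Src j)) = bits_to_nat n (\<omega>' (Src j))"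
      using local by (simp add: In_edges_ex_Ubar xor_code_def)
    then have inputs_eq: "\<forall>j\<in>{1..r} - {i}. \<forall>k<n. \<omega> (Src j) k = \<omega>' (Src j) k"
      by (simp add: bits_to_nat_eq_iff)
    have "\<forall>k<n. src_parity ({1..r} - {i}) \<omega> k = src_parity ({1..r} - {i}) \<omega>' k"
    proof (intro allI impI)
      fix k assume "k < n"
      then show "src_parity ({1..r} - {i}) \<omega> k = src_parity ({1..r} - {i}) \<omega>' k"
        using inputs_eq by (intro src_parity_cong) blast
    qed
    then show ?thesis using Ubar_Dst by (simp add: xor_code_def bits_to_nat_eq_iff)
  qed (use local in \<open>simp_all add: xor_code_def\<close>)
qed

lemma xor_key_decodable:
  assumes i: "i \<in> {1..r}"
  shows "cond_ent (sample_space (ex_sources r) n) (xor_key r n)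
    (msgs (xor_code r n) (In_edges (ex_edges r) (Dst i))) = 0"
  unfolding cond_ent_eq_0_iff[OF finite_ex_sample_space]
proof (intro ballI impI)
  fix \<omega> \<omega>'
  assume "msgs (xor_code r n) (In_edges (ex_edges r) (Dst i)) \<omega>
    = msgs (xor_code r n) (In_edges (ex_edges r) (Dst i)) \<omega>'"
  then have "\<forall>k<n. \<omega> (Src i) k = \<omega>' (Src i) k"
    and "\<forall>k<n. src_parity ({1..r} - {i}) \<omega> k = src_parity ({1..r} - {i}) \<omega>' k"
    by (simp_all add: msgs_eq_iff In_edges_ex_Dst[OF i] xor_code_def bits_to_nat_eq_iff)
  then show "xor_key r n \<omega> = xor_key r n \<omega>'"
    using src_parity_remove[OF _ i, of \<omega>] src_parity_remove[OF _ i, of \<omega>']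
    by (simp add: xor_key_def bits_to_nat_eq_iff)
qed

lemma xor_key_flip:
  fixes r n j :: nat and \<omega> \<omega>\<^sub>0 \<omega>\<^sub>1 :: "node outcome"
  assumes j: "j \<in> {1..r}" and key: "xor_key r n \<omega> = xor_key r n \<omega>\<^sub>0"
  defines "flip \<equiv> \<lambda>k. k < n \<and> src_parity {1..r} \<omega>\<^sub>0 k \<noteq> src_parity {1..r} \<omega>\<^sub>1 k"
  shows "xor_key r n (\<omega>(Src j := (\<lambda>k. \<omega> (Src j) k \<noteq> flip k))) = xor_key r n \<omega>\<^sub>1"
  unfolding xor_key_def bits_to_nat_eq_iff
proof (intro allI impI)
  fix k assume "k < n"
  then have key_k: "src_parity {1..r} \<omega> k = src_parity {1..r} \<omega>\<^sub>0 k"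
    using key by (simp add: xor_key_def bits_to_nat_eq_iff)
  define \<omega>' where "\<omega>' = \<omega>(Src j := (\<lambda>k. \<omega> (Src j) k \<noteq> flip k))"
  have remove_j: "src_parity {1..r} \<nu> k = (src_parity ({1..r} - {j}) \<nu> k \<noteq> \<nu> (Src j) k)" for \<nu>
    using src_parity_remove[OF _ j] by simp
  have "src_parity ({1..r} - {j}) \<omega>' k = src_parity ({1..r} - {j}) \<omega> k"
    by (rule src_parity_cong) (simp add: \<omega>'_def)
  then have "src_parity {1..r} \<omega>' k = (src_parity ({1..r} - {j}) \<omega> k \<noteq> (\<omega> (Src j) k \<noteq> flip k))"
    using remove_j[of \<omega>'] by (simp add: \<omega>'_def)
  also have "\<dots> = (src_parity {1..r} \<omega> k \<noteq> flip k)"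
    using remove_j[of \<omega>] by blast
  also have "\<dots> = src_parity {1..r} \<omega>\<^sub>1 k"
    using key_k \<open>k < n\<close> by (auto simp: flip_def)
  finally show "src_parity {1..r} (\<omega>(Src j := (\<lambda>k. \<omega> (Src j) k \<noteq> flip k))) k
      = src_parity {1..r} \<omega>\<^sub>1 k"
    unfolding \<omega>'_def .
qed

text \<open>Flipping bits of s_j moves any key value to any other one (xor_key_flip) without changing
  messages that leave other sources.\<close>
lemma xor_key_secret:
  assumes j: "j \<in> {1..r}" and avoid: "\<forall>e\<in>\<beta>. \<exists>j'. fst e = Src j' \<and> j' \<noteq> j"
  shows "uniform_rv (sample_space (ex_sources r) n) (xor_key r n)"
    and "mutual_info (sample_space (ex_sources r) n) (xor_key r n) (msgs (xor_code r n) \<beta>) = 0"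
proof -
  let ?\<Omega> = "sample_space (ex_sources r) n"
  have shift: "\<exists>\<tau>. inj_on \<tau> ?\<Omega> \<and> \<tau> ` ?\<Omega> \<subseteq> ?\<Omega>
      \<and> (\<forall>\<omega>\<in>?\<Omega>. msgs (xor_code r n) \<beta> (\<tau> \<omega>) = msgs (xor_code r n) \<beta> \<omega>)
      \<and> (\<forall>\<omega>\<in>?\<Omega>. xor_key r n \<omega> = xor_key r n \<omega>\<^sub>0 \<longrightarrow> xor_key r n (\<tau> \<omega>) = xor_key r n \<omega>\<^sub>1)"
    for \<omega>\<^sub>0 \<omega>\<^sub>1
  proof (intro exI conjI)
    define flip where "flip k = (k < n \<and> src_parity {1..r} \<omega>\<^sub>0 k \<noteq> src_parity {1..r} \<omega>\<^sub>1 k)" for k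
    define \<tau> where "\<tau> \<omega> = \<omega>(Src j := (\<lambda>k. \<omega> (Src j) k \<noteq> flip k))" for \<omega> :: "node outcome"
    have "\<tau> (\<tau> \<omega>) = \<omega>" for \<omega> by (auto simp: \<tau>_def fun_eq_iff)
    then show "inj_on \<tau> ?\<Omega>" by (metis inj_on_inverseI)
    show "\<tau> ` ?\<Omega> \<subseteq> ?\<Omega>"
    proof (rule image_subsetI)
      fix \<omega> assume \<omega>: "\<omega> \<in> ?\<Omega>"
      have "\<tau> \<omega> v k = False" if "v \<notin> ex_sources r \<or> n \<le> k" for v k
        using \<omega> that j
        by (cases "v = Src j") (auto simp: \<tau>_def flip_def sample_space_def Src_in_ex_sources_iff)
      then show "\<tau> \<omega> \<in> ?\<Omega>" by (simp add: sample_space_def)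
    qed
    show "\<forall>\<omega>\<in>?\<Omega>. msgs (xor_code r n) \<beta> (\<tau> \<omega>) = msgs (xor_code r n) \<beta> \<omega>"
    proof (intro ballI)
      fix \<omega> :: "node outcome"
      have "xor_code r n (\<tau> \<omega>) e = xor_code r n \<omega> e" if "e \<in> \<beta>" for e
        using avoid that by (auto simp: xor_code_def \<tau>_def)
      then show "msgs (xor_code r n) \<beta> (\<tau> \<omega>) = msgs (xor_code r n) \<beta> \<omega>"
        by (simp add: msgs_eq_iff)
    qed
    show "\<forall>\<omega>\<in>?\<Omega>. xor_key r n \<omega> = xor_key r n \<omega>\<^sub>0 \<longrightarrow> xor_key r n (\<tau> \<omega>) = xor_key r n \<omega>\<^sub>1"
      using xor_key_flip[OF j] by (simp add: \<tau>_def flip_def)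
  qed
  show "uniform_rv ?\<Omega> (xor_key r n)"
    using finite_ex_sample_space shift by (rule indep_if_shifts(1))
  show "mutual_info ?\<Omega> (xor_key r n) (msgs (xor_code r n) \<beta>) = 0"
    using finite_ex_sample_space shift by (rule indep_if_shifts(2))
qed

lemma xor_key_image:
  assumes "1 \<le> r"
  shows "xor_key r n ` sample_space (ex_sources r) n = {..<2 ^ n}"
proof
  show "xor_key r n ` sample_space (ex_sources r) n \<subseteq> {..<2 ^ n}"
    by (auto simp: xor_key_def bits_to_nat_less)
  show "{..<2 ^ n} \<subseteq> xor_key r n ` sample_space (ex_sources r) n"
  proof
    fix x :: nat assume "x \<in> {..<2 ^ n}"
    define \<omega> :: "node outcome" where "\<omega> v k = (v = Src 1 \<and> k < n \<and> bit x k)" for v k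
    have "\<omega> \<in> sample_space (ex_sources r) n"
      using assms by (auto simp: \<omega>_def sample_space_def Src_in_ex_sources_iff)
    moreover have "src_parity {1..r} \<omega> k = bit x k" if "k < n" for k
    proof -
      have "{i\<in>{1..r}. \<omega> (Src i) k} = (if bit x k then {1} else {})"
        using assms that by (auto simp: \<omega>_def)
      then show ?thesis by (simp add: src_parity_def)
    qed
    then have "xor_key r n \<omega> = bits_to_nat n (bit x)"
      by (simp add: xor_key_def bits_to_nat_eq_iff)
    then have "xor_key r n \<omega> = x"
      using \<open>x \<in> {..<2 ^ n}\<close> bits_to_nat_bit by simp
    ultimately show "x \<in> xor_key r n ` sample_space (ex_sources r) n" by blast
  qed
qed

lemma ex_wiretap_avoids_source:
  assumes "2 \<le> r" "\<beta> \<in> ex_wiretap r"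
  shows "\<exists>j\<in>{1..r}. \<forall>e\<in>\<beta>. \<exists>j'. fst e = Src j' \<and> j' \<noteq> j"
proof -
  obtain i where i: "i \<in> {1..r}"
    and "\<beta> = In_edges (ex_edges r) (Unode i) \<or> \<beta> = In_edges (ex_edges r) (Ubar i)"
    using assms(2) unfolding ex_wiretap_def by blast
  then consider "\<beta> = {(Src i, Unode i)}" | "\<beta> = (\<lambda>j. (Src j, Ubar i)) ` ({1..r} - {i})"
    using In_edges_ex_Unode In_edges_ex_Ubar by blast
  then show ?thesis
  proof cases
    case 1
    define j where "j = (if i = 1 then 2 else 1 :: nat)"
    have "j \<in> {1..r}" "j \<noteq> i" using assms(1) i by (auto simp: j_def)
    with 1 show ?thesis by auto
  qed (use i in auto)
qed

lemma key_feasible_mono: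
  assumes "key_feasible E c S D B R n" "R' \<le> R"
  shows "key_feasible E c S D B R' n"
proof -
  have "R' * real n \<le> R * real n" using assms(2) by (simp add: mult_right_mono)
  then show ?thesis using assms(1) unfolding key_feasible_def by (meson order_trans)
qed

lemma ex_key_feasible_xor:
  assumes "2 \<le> r"
  shows "key_feasible (ex_edges r) ex_cap (ex_sources r) (ex_terminals r) (ex_wiretap r) 1 n"
  unfolding key_feasible_def
proof (intro exI conjI ballI)
  let ?\<Omega> = "sample_space (ex_sources r) n"
  have one: "1 \<in> {1..r}" using assms by simp
  show "is_code (ex_edges r) ex_cap (ex_sources r) n n (xor_code r n)" by (rule is_code_xor_code)
  show unif: "uniform_rv ?\<Omega> (xor_key r n)" by (rule xor_key_secret(1)[OF one, of "{}"]) simp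
  show "1 * real n \<le> ent ?\<Omega> (xor_key r n)"
    using ent_uniform_rv[OF finite_ex_sample_space sample_space_nonempty unif] xor_key_image[of r n] assms
    by simp
  show "cond_ent ?\<Omega> (xor_key r n) (msgs (xor_code r n) (In_edges (ex_edges r) d)) = 0"
    if "d \<in> ex_terminals r" for d
    using that xor_key_decodable unfolding ex_terminals_def by blast
  show "mutual_info ?\<Omega> (xor_key r n) (msgs (xor_code r n) \<beta>) = 0" if "\<beta> \<in> ex_wiretap r" for \<beta>
    using ex_wiretap_avoids_source[OF assms that] xor_key_secret(2) by blast
qed

lemma ex_key_rate_achievable:
  assumes "2 \<le> r"
  shows "key_rate_achievable (ex_edges r) ex_cap (ex_sources r) (ex_terminals r) (ex_wiretap r) 1"
proof -
  have "{n. key_feasible (ex_edges r) ex_cap (ex_sources r) (ex_terminals r) (ex_wiretap r) (1 - \<Delta>) n}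
      = UNIV" if "\<Delta> > 0" for \<Delta>
    using key_feasible_mono[OF ex_key_feasible_xor[OF assms]] that by simp
  then show ?thesis unfolding key_rate_achievable_def by simp
qed

theorem mainTheorem5:
  fixes r :: nat
  assumes "r \<ge> 2"
  shows "key_rate_achievable (ex_edges r) ex_cap (ex_sources r) (ex_terminals r) (ex_wiretap r) 1
       \<and> (\<forall>R. key_rate_achievable (ex_edges r) ex_cap (ex_sources r) (ex_terminals r) (ex_wiretap r) R
               \<longrightarrow> R \<le> 1)
       \<and> (\<forall>R. key2_rate_achievable (ex_edges r) ex_cap (ex_sources r) (ex_terminals r) (ex_wiretap r) R
               \<longrightarrow> R \<le> 1 / (real r - 1))"
  using ex_key_rate_achievable[OF assms] ex_key_achievable_rate_le[OF assms]
    ex_key2_achievable_rate_le[OF assms]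
  by blast

end
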